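(* The formal power series $L$ and $R$ satisfy $L(z,x)=x^{-1}\bigl(L(z,x)-xL_1(z)\bigr)+R(z,x)$ and $R(z,x)=z\,R(z,x)\,L(z,x)+x$, where $L_1(z)$ is the coefficient of $x^1$ in $L(z,x)$.
   Context: Formulas are built from atoms by a binary product: every formula is an atom or $A\bullet B$. A context is a finite (possibly empty) list of formulas; commas denote concatenation; its length is its number of formulas. Size: $|p|=0$, $|A\bullet B|=1+|A|+|B|$. Frontier: $\mathrm{fr}(p)=p$, $\mathrm{fr}(A\bullet B)=\mathrm{fr}(A),\mathrm{fr}(B)$. A context is irreducible if its leftmost formula is not a product (it is empty or begins with an atom). A focused derivation is a finite derivation tree with no undischarged premises using only: ($\bullet L$) from $A,B,\Delta\vdash C$ infer $A\bullet B,\Delta\vdash C$; ($\bullet R^{foc}$) from $\Gamma\vdash A$ and $\Delta\vdash B$ infer $\Gamma,\Delta\vdash A\bullet B$ with $\Gamma$ irreducible; ($id^{atm}$) $p\vdash p$ for atoms $p$. For each $n$ fix the frontier $p_0,\dots,p_n$ of distinct atoms. Let $\ell_{n,k}$ (resp. $r_{n,k}$) be the number of focused derivations of sequents $\Gamma\vdash B$ with $|B|=n$, $\mathrm{fr}(B)=p_0,\dots,p_n$, and $\Gamma$ a context (resp. an irreducible context) of length $k$. $L(z,x)=\sum_{n,k}\ell_{n,k}z^nx^k$ and $R(z,x)=\sum_{n,k}r_{n,k}z^nx^k$. *)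

theory Defs
  imports Main "HOL-Computational_Algebra.Formal_Power_Series" "HOL-Computational_Algebra.Formal_Laurent_Series"
begin

(* Formulas: atoms (atoms are natural numbers; p_i is Atom i) or binary products A \<bullet> B *)
datatype form = Atom nat | Prod form form

fun fsize :: "form \<Rightarrow> nat" where
  "fsize (Atom p) = 0"
| "fsize (Prod A B) = 1 + fsize A + fsize B"

fun fr :: "form \<Rightarrow> nat list" where
  "fr (Atom p) = [p]"
| "fr (Prod A B) = fr A @ fr B"

fun irreducible :: "form list \<Rightarrow> bool" where
  "irreducible [] = True"
| "irreducible (Atom p # \<Gamma>) = True"
| "irreducible (Prod A B # \<Gamma>) = False"

datatype deriv =
    IdD nat                                       (* p |- p *)
  | LD form form "form list" form deriv           (* from A,B,Delta |- C infer A.B,Delta |- C *)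
  | RD "form list" "form list" form form deriv deriv
                                                  (* from Gamma |- A, Delta |- B infer Gamma,Delta |- A.B *)

fun concl :: "deriv \<Rightarrow> form list \<times> form" where
  "concl (IdD p) = ([Atom p], Atom p)"
| "concl (LD A B \<Delta> C d) = (Prod A B # \<Delta>, C)"
| "concl (RD \<Gamma> \<Delta> A B d1 d2) = (\<Gamma> @ \<Delta>, Prod A B)"

fun focused :: "deriv \<Rightarrow> bool" where
  "focused (IdD p) = True"
| "focused (LD A B \<Delta> C d) = (focused d \<and> concl d = (A # B # \<Delta>, C))"
| "focused (RD \<Gamma> \<Delta> A B d1 d2) =
     (focused d1 \<and> focused d2 \<and> concl d1 = (\<Gamma>, A) \<and> concl d2 = (\<Delta>, B) \<and> irreducible \<Gamma>)"

definition ell :: "nat \<Rightarrow> nat \<Rightarrow> nat" where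
  "ell n k = card {d. focused d \<and> fsize (snd (concl d)) = n \<and> fr (snd (concl d)) = [0..<Suc n]
                     \<and> length (fst (concl d)) = k}"

definition rr :: "nat \<Rightarrow> nat \<Rightarrow> nat" where
  "rr n k = card {d. focused d \<and> fsize (snd (concl d)) = n \<and> fr (snd (concl d)) = [0..<Suc n]
                     \<and> length (fst (concl d)) = k \<and> irreducible (fst (concl d))}"

(* Bivariate generating functions as power series in x whose coefficients are
   power series in z:  L = sum_k (sum_n ell n k z^n) x^k. *)
definition Lgf :: "int fps fps" where
  "Lgf = Abs_fps (\<lambda>k. Abs_fps (\<lambda>n. int (ell n k)))"

definition Rgf :: "int fps fps" where
  "Rgf = Abs_fps (\<lambda>k. Abs_fps (\<lambda>n. int (rr n k)))"

(* the variables: x is the outer indeterminate, z the inner one *)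
abbreviation xvar :: "int fps fps" where "xvar \<equiv> fps_X"
abbreviation zvar :: "int fps fps" where "zvar \<equiv> fps_const fps_X"

end

theory Submission
  imports Defs
begin

text \<open>A focused derivation whose context starts with a product must end with the left rule,
  whose premise has a context one formula longer; this gives
  \<open>\<ell>\<^sub>n\<^sub>,\<^sub>k = r\<^sub>n\<^sub>,\<^sub>k + \<ell>\<^sub>n\<^sub>,\<^sub>k\<^sub>+\<^sub>1\<close>, the coefficientwise form of the first equation.
  A derivation with irreducible context is either an axiom or ends with the focused right rule,
  which cuts the frontier \<open>p\<^sub>0,\<dots>,p\<^sub>n\<close> into \<open>p\<^sub>0,\<dots>,p\<^sub>j\<close> (derived from an irreducible
  context) and \<open>p\<^sub>j\<^sub>+\<^sub>1,\<dots>,p\<^sub>n\<close> (from an arbitrary context). Since counts are invariant under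
  renaming atoms, \<open>r\<^sub>n\<^sub>,\<^sub>k = \<Sum> r\<^sub>j\<^sub>,\<^sub>i \<ell>\<^sub>n\<^sub>-\<^sub>1\<^sub>-\<^sub>j\<^sub>,\<^sub>k\<^sub>-\<^sub>i\<close>, which is the second equation.\<close>

abbreviation antecedent :: "deriv \<Rightarrow> form list" where "antecedent d \<equiv> fst (concl d)"
abbreviation succedent :: "deriv \<Rightarrow> form" where "succedent d \<equiv> snd (concl d)"

lemma length_fr: "length (fr C) = Suc (fsize C)"
  by (induction C) auto

lemma fr_not_Nil: "fr C \<noteq> []"
  using length_fr[of C] by auto

lemma focused_concat_fr_antecedent:
  "focused d \<Longrightarrow> concat (map fr (antecedent d)) = fr (succedent d)"
  by (induction d) auto

lemma focused_antecedent_not_Nil: "focused d \<Longrightarrow> antecedent d \<noteq> []"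
  by (induction d) auto

lemma length_le_length_concat_fr: "length Cs \<le> length (concat (map fr Cs))"
proof (induction Cs)
  case (Cons C Cs)
  then show ?case using fr_not_Nil[of C] by (cases "fr C") auto
qed simp

lemma focused_length_antecedent: "focused d \<Longrightarrow> length (antecedent d) \<le> length (fr (succedent d))"
  using focused_concat_fr_antecedent length_le_length_concat_fr by metis

lemma irreducible_append: "xs \<noteq> [] \<Longrightarrow> irreducible xs \<Longrightarrow> irreducible (xs @ ys)"
  by (cases xs rule: irreducible.cases) auto

lemma focused_antecedent_reducible:
  assumes "focused d" "\<not> irreducible (antecedent d)"
  obtains A B \<Delta> C d' where "d = LD A B \<Delta> C d'"
proof (cases d)
  case (RD \<Gamma> \<Delta> A' B' d1 d2)
  with assms focused_antecedent_not_Nil[of d1] show ?thesis by (auto simp: irreducible_append)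
qed (use assms that in auto)

definition derivs :: "nat list \<Rightarrow> nat \<Rightarrow> deriv set" where
  "derivs xs k = {d. focused d \<and> fr (succedent d) = xs \<and> length (antecedent d) = k}"

definition irr_derivs :: "nat list \<Rightarrow> nat \<Rightarrow> deriv set" where
  "irr_derivs xs k = {d \<in> derivs xs k. irreducible (antecedent d)}"

lemma irr_derivs_subset: "irr_derivs xs k \<subseteq> derivs xs k"
  by (auto simp: irr_derivs_def)

lemma derivs_0: "derivs xs 0 = {}"
  using focused_antecedent_not_Nil by (auto simp: derivs_def)

lemma derivs_eq_empty: "length xs < k \<Longrightarrow> derivs xs k = {}"
  using focused_length_antecedent by (fastforce simp: derivs_def)

lemma fsize_eq_if_fr_eq_upt: "fr C = [0..<Suc n] \<Longrightarrow> fsize C = n"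
  using length_fr[of C] by simp

lemma ell_eq_card_derivs: "ell n k = card (derivs [0..<Suc n] k)"
  unfolding ell_def derivs_def by (metis fsize_eq_if_fr_eq_upt)

lemma rr_eq_card_irr_derivs: "rr n k = card (irr_derivs [0..<Suc n] k)"
  unfolding rr_def irr_derivs_def derivs_def
  by (rule arg_cong[where f = card]) (auto simp del: upt_Suc dest: fsize_eq_if_fr_eq_upt)

subsection \<open>The left rule\<close>

fun left_intro :: "deriv \<Rightarrow> deriv" where
  "left_intro d = (case concl d of (A # B # \<Delta>, C) \<Rightarrow> LD A B \<Delta> C d | _ \<Rightarrow> d)"

lemma left_intro_derivs:
  assumes "d \<in> derivs xs (Suc k)" "k \<ge> 1"
  obtains A B \<Delta> C where "concl d = (A # B # \<Delta>, C)" "left_intro d = LD A B \<Delta> C d"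
proof -
  obtain \<Gamma> C where c: "concl d = (\<Gamma>, C)" by (cases "concl d")
  with assms obtain A B \<Delta> where "\<Gamma> = A # B # \<Delta>"
    by (cases \<Gamma>; cases "tl \<Gamma>") (auto simp: derivs_def)
  with c that show ?thesis by simp
qed

lemma derivs_eq_irr_derivs_Un:
  assumes "k \<ge> 1"
  shows "derivs xs k = irr_derivs xs k \<union> left_intro ` derivs xs (Suc k)"
proof (intro equalityI subsetI)
  fix d assume d: "d \<in> derivs xs k"
  show "d \<in> irr_derivs xs k \<union> left_intro ` derivs xs (Suc k)"
  proof (cases "irreducible (antecedent d)")
    case True
    with d show ?thesis by (auto simp: irr_derivs_def)
  next
    case False
    with d obtain A B \<Delta> C d' where "d = LD A B \<Delta> C d'"
      by (auto simp: derivs_def elim: focused_antecedent_reducible)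
    with d have "d' \<in> derivs xs (Suc k)" "left_intro d' = d" by (auto simp: derivs_def)
    then show ?thesis by blast
  qed
next
  fix d assume "d \<in> irr_derivs xs k \<union> left_intro ` derivs xs (Suc k)"
  then consider "d \<in> irr_derivs xs k" | d' where "d' \<in> derivs xs (Suc k)" "d = left_intro d'"
    by blast
  then show "d \<in> derivs xs k"
  proof cases
    case (2 d')
    then obtain A B \<Delta> C where "concl d' = (A # B # \<Delta>, C)" "d = LD A B \<Delta> C d'"
      using left_intro_derivs[OF 2(1) assms] by metis
    with 2 show ?thesis by (auto simp: derivs_def)
  qed (use irr_derivs_subset in blast)
qed

lemma inj_on_left_intro: "k \<ge> 1 \<Longrightarrow> inj_on left_intro (derivs xs (Suc k))"
  by (rule inj_onI) (metis left_intro_derivs deriv.inject(2))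

lemma irr_derivs_disjoint_left_intro:
  "k \<ge> 1 \<Longrightarrow> irr_derivs xs k \<inter> left_intro ` derivs xs (Suc k) = {}"
  by (auto simp: irr_derivs_def elim!: left_intro_derivs)

subsection \<open>The focused right rule\<close>

fun right_intro :: "deriv \<times> deriv \<Rightarrow> deriv" where
  "right_intro (d1, d2) = RD (antecedent d1) (antecedent d2) (succedent d1) (succedent d2) d1 d2"

lemma inj_right_intro: "inj right_intro"
  by (rule injI) auto

definition premise_pairs :: "nat list \<Rightarrow> nat \<Rightarrow> (deriv \<times> deriv) set" where
  "premise_pairs xs k = (\<Union>(i, j) \<in> {1..<length xs} \<times> {..k}.
     irr_derivs (take i xs) j \<times> derivs (drop i xs) (k - j))"

lemma irr_derivs_eq_Un:
  "irr_derivs xs k = (if length xs = 1 \<and> k = 1 then {IdD (hd xs)} else {})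
     \<union> right_intro ` premise_pairs xs k"
proof (intro equalityI subsetI)
  fix d assume d: "d \<in> irr_derivs xs k"
  show "d \<in> (if length xs = 1 \<and> k = 1 then {IdD (hd xs)} else {}) \<union> right_intro ` premise_pairs xs k"
  proof (cases d)
    case (RD \<Gamma> \<Delta> A B d1 d2)
    have prems: "focused d1" "focused d2" "concl d1 = (\<Gamma>, A)" "concl d2 = (\<Delta>, B)" "irreducible \<Gamma>"
      and xs: "xs = fr A @ fr B" and k: "k = length \<Gamma> + length \<Delta>"
      using d RD by (auto simp: irr_derivs_def derivs_def)
    define i where "i = length (fr A)"
    have "i \<in> {1..<length xs}" using length_fr[of A] length_fr[of B] xs i_def by simp
    moreover have "d1 \<in> irr_derivs (take i xs) (length \<Gamma>)" "d2 \<in> derivs (drop i xs) (k - length \<Gamma>)"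
      using prems xs k i_def by (auto simp: irr_derivs_def derivs_def)
    ultimately have "(d1, d2) \<in> premise_pairs xs k"
      unfolding premise_pairs_def using k by (intro UN_I[of "(i, length \<Gamma>)"]) auto
    moreover have "d = right_intro (d1, d2)" using RD prems by simp
    ultimately show ?thesis by blast
  qed (use d in \<open>auto simp: irr_derivs_def derivs_def\<close>)
next
  fix d assume "d \<in> (if length xs = 1 \<and> k = 1 then {IdD (hd xs)} else {}) \<union> right_intro ` premise_pairs xs k"
  then consider "length xs = 1" "k = 1" "d = IdD (hd xs)"
    | i j d1 d2 where "j \<le> k" "d = right_intro (d1, d2)"
        "d1 \<in> irr_derivs (take i xs) j" "d2 \<in> derivs (drop i xs) (k - j)"
    unfolding premise_pairs_def by (auto split: if_splits)
  then show "d \<in> irr_derivs xs k"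
  proof cases
    case 1
    then show ?thesis by (cases xs) (auto simp: irr_derivs_def derivs_def)
  next
    case (2 i j d1 d2)
    then have "irreducible (antecedent d1 @ antecedent d2)"
      using focused_antecedent_not_Nil[of d1] irreducible_append
      by (auto simp: irr_derivs_def derivs_def)
    with 2 show ?thesis by (auto simp: irr_derivs_def derivs_def)
  qed
qed

lemma disjoint_family_premise_pairs:
  assumes "p \<in> {1..<length xs} \<times> {..k}" "q \<in> {1..<length xs} \<times> {..k}" "p \<noteq> q"
  shows "(case p of (i, j) \<Rightarrow> irr_derivs (take i xs) j \<times> derivs (drop i xs) (k - j))
       \<inter> (case q of (i, j) \<Rightarrow> irr_derivs (take i xs) j \<times> derivs (drop i xs) (k - j)) = {}"
proof -
  obtain i j i' j' where pq: "p = (i, j)" "q = (i', j')" by fastforce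
  have "length (take i xs) = i" "length (take i' xs) = i'" "(i, j) \<noteq> (i', j')"
    using assms pq by auto
  then have "(take i xs, j) \<noteq> (take i' xs, j')"
    by (metis prod.inject)
  then have "irr_derivs (take i xs) j \<inter> irr_derivs (take i' xs) j' = {}"
    by (auto simp: irr_derivs_def derivs_def)
  with pq show ?thesis by blast
qed

lemma finite_derivs: "finite (derivs xs k)"
proof (induction xs arbitrary: k rule: length_induct)
  case (1 xs)
  have "finite (premise_pairs xs j)" for j
    unfolding premise_pairs_def
    using 1 finite_subset[OF irr_derivs_subset] by (force intro!: finite_cartesian_product)
  then have finite_irr: "finite (irr_derivs xs j)" for j
    by (simp add: irr_derivs_eq_Un[of xs j])
  show ?case
  proof (cases "k \<le> Suc (length xs)")
    case True
    then show ?thesis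
    proof (induction k rule: inc_induct)
      case base
      show ?case by (simp add: derivs_eq_empty)
    next
      case (step i)
      show ?case
      proof (cases "i = 0")
        case False
        then show ?thesis
          using step.IH finite_irr derivs_eq_irr_derivs_Un[of i xs] by simp
      qed (simp add: derivs_0)
    qed
  next
    case False
    then show ?thesis by (simp add: derivs_eq_empty)
  qed
qed

lemma finite_irr_derivs: "finite (irr_derivs xs k)"
  using finite_subset[OF irr_derivs_subset finite_derivs] .

lemma card_derivs:
  assumes "k \<ge> 1"
  shows "card (derivs xs k) = card (irr_derivs xs k) + card (derivs xs (Suc k))"
proof -
  have "card (derivs xs k) = card (irr_derivs xs k) + card (left_intro ` derivs xs (Suc k))"
    unfolding derivs_eq_irr_derivs_Un[OF assms]
    using irr_derivs_disjoint_left_intro[OF assms]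
    by (simp add: card_Un_disjoint finite_irr_derivs finite_derivs)
  also have "card (left_intro ` derivs xs (Suc k)) = card (derivs xs (Suc k))"
    by (rule card_image[OF inj_on_left_intro[OF assms]])
  finally show ?thesis .
qed

lemma finite_premise_pairs: "finite (premise_pairs xs k)"
  unfolding premise_pairs_def by (auto intro!: finite_irr_derivs finite_derivs)

lemma card_premise_pairs:
  "card (premise_pairs xs k) = (\<Sum>i=1..<length xs. \<Sum>j\<le>k.
     card (irr_derivs (take i xs) j) * card (derivs (drop i xs) (k - j)))"
proof -
  define F where "F = (\<lambda>(i, j). irr_derivs (take i xs) j \<times> derivs (drop i xs) (k - j))"
  have "card (premise_pairs xs k) = (\<Sum>p \<in> {1..<length xs} \<times> {..k}. card (F p))"
    unfolding premise_pairs_def F_def[symmetric]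
  proof (rule card_UN_disjoint)
    show "\<forall>p\<in>{1..<length xs} \<times> {..k}. \<forall>q\<in>{1..<length xs} \<times> {..k}. p \<noteq> q \<longrightarrow> F p \<inter> F q = {}"
      unfolding F_def using disjoint_family_premise_pairs by blast
  qed (auto simp: F_def finite_irr_derivs finite_derivs)
  then show ?thesis
    by (simp add: F_def sum.cartesian_product card_cartesian_product split_def)
qed

lemma card_irr_derivs:
  "card (irr_derivs xs k) = (if length xs = 1 \<and> k = 1 then 1 else 0) +
     (\<Sum>i=1..<length xs. \<Sum>j\<le>k. card (irr_derivs (take i xs) j) * card (derivs (drop i xs) (k - j)))"
proof -
  have "right_intro p \<noteq> IdD a" for p a by (cases p) auto
  then have "card (irr_derivs xs k) = (if length xs = 1 \<and> k = 1 then 1 else 0)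
      + card (right_intro ` premise_pairs xs k)"
    by (subst irr_derivs_eq_Un, subst card_Un_disjoint) (auto simp: finite_premise_pairs)
  also have "card (right_intro ` premise_pairs xs k) = card (premise_pairs xs k)"
    by (rule card_image[OF inj_on_subset[OF inj_right_intro subset_UNIV]])
  finally show ?thesis by (simp add: card_premise_pairs)
qed

subsection \<open>Renaming atoms\<close>

fun map_form :: "(nat \<Rightarrow> nat) \<Rightarrow> form \<Rightarrow> form" where
  "map_form f (Atom p) = Atom (f p)"
| "map_form f (Prod A B) = Prod (map_form f A) (map_form f B)"

fun map_deriv :: "(nat \<Rightarrow> nat) \<Rightarrow> deriv \<Rightarrow> deriv" where
  "map_deriv f (IdD p) = IdD (f p)"
| "map_deriv f (LD A B \<Delta> C d) =
     LD (map_form f A) (map_form f B) (map (map_form f) \<Delta>) (map_form f C) (map_deriv f d)"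
| "map_deriv f (RD \<Gamma> \<Delta> A B d1 d2) =
     RD (map (map_form f) \<Gamma>) (map (map_form f) \<Delta>) (map_form f A) (map_form f B)
        (map_deriv f d1) (map_deriv f d2)"

lemma map_form_inverse: "(\<And>a. g (f a) = a) \<Longrightarrow> map_form g (map_form f C) = C"
  by (induction C) auto

lemma map_deriv_inverse:
  assumes "\<And>a. g (f a) = a"
  shows "map_deriv g (map_deriv f d) = d"
  by (induction d) (auto simp: map_form_inverse[of g f, OF assms] comp_def assms)

lemma fr_map_form: "fr (map_form f C) = map f (fr C)"
  by (induction C) auto

lemma irreducible_map_map_form: "irreducible (map (map_form f) \<Gamma>) = irreducible \<Gamma>"
  by (cases \<Gamma> rule: irreducible.cases) auto

lemma concl_map_deriv:
  "concl (map_deriv f d) = (map (map_form f) (antecedent d), map_form f (succedent d))"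
  by (induction d) auto

lemma focused_map_deriv: "focused d \<Longrightarrow> focused (map_deriv f d)"
  by (induction d) (auto simp: concl_map_deriv irreducible_map_map_form)

lemma map_deriv_derivs: "d \<in> derivs xs k \<Longrightarrow> map_deriv f d \<in> derivs (map f xs) k"
  by (auto simp: derivs_def focused_map_deriv concl_map_deriv fr_map_form)

lemma card_derivs_map:
  assumes "\<And>a. g (f a) = a" "\<And>a. f (g a) = a"
  shows "card (derivs (map f xs) k) = card (derivs xs k)"
proof -
  have "map_deriv g ` derivs (map f xs) k \<subseteq> derivs xs k"
    using map_deriv_derivs[of _ "map f xs" k g] by (auto simp: comp_def assms(1))
  then have "bij_betw (map_deriv f) (derivs xs k) (derivs (map f xs) k)"
    by (intro bij_betw_byWitness[where f' = "map_deriv g"])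
       (auto simp: map_deriv_inverse assms map_deriv_derivs)
  then show ?thesis by (simp add: bij_betw_same_card)
qed

lemma card_derivs_upt_shift: "card (derivs [i..<i + N] k) = card (derivs [0..<N] k)"
proof -
  define f where "f b = (if b < N then b + i else if b < N + i then b - N else b)" for b
  define g where "g a = (if a < i then a + N else if a < i + N then a - i else a)" for a
  have "g (f a) = a" "f (g a) = a" for a
    by (auto simp: f_def g_def)
  moreover have "map f [0..<N] = [i..<i + N]"
    by (simp add: f_def map_add_upt[symmetric] add.commute cong: map_cong)
  ultimately show ?thesis using card_derivs_map by metis
qed

subsection \<open>Recurrences for the coefficients\<close>

lemma ell_0: "ell n 0 = 0"
  by (simp add: ell_eq_card_derivs derivs_0)

lemma rr_0: "rr n 0 = 0"
  using irr_derivs_subset[of _ 0] by (simp add: rr_eq_card_irr_derivs derivs_0)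

lemma ell_eq_rr_plus_ell_Suc: "k \<ge> 1 \<Longrightarrow> ell n k = rr n k + ell n (Suc k)"
  unfolding ell_eq_card_derivs rr_eq_card_irr_derivs by (rule card_derivs)

lemma rr_atom: "rr 0 k = (if k = 1 then 1 else 0)"
  unfolding rr_eq_card_irr_derivs card_irr_derivs[of "[0..<Suc 0]"] by simp

lemma rr_Suc: "rr (Suc n) k = (\<Sum>i\<le>k. \<Sum>j\<le>n. rr j i * ell (n - j) (k - i))"
proof -
  have split_at: "card (irr_derivs (take (Suc j) [0..<Suc (Suc n)]) i)
      * card (derivs (drop (Suc j) [0..<Suc (Suc n)]) (k - i)) = rr j i * ell (n - j) (k - i)"
    if "j \<le> n" for i j
  proof -
    have "take (Suc j) [0..<Suc (Suc n)] = [0..<Suc j]"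
      "drop (Suc j) [0..<Suc (Suc n)] = [Suc j..<Suc j + Suc (n - j)]"
      using that by (simp_all del: upt_Suc add: take_upt)
    then show ?thesis
      by (simp only: rr_eq_card_irr_derivs ell_eq_card_derivs card_derivs_upt_shift)
  qed
  have "rr (Suc n) k = (\<Sum>c=Suc 0..<Suc (Suc n). \<Sum>i\<le>k.
      card (irr_derivs (take c [0..<Suc (Suc n)]) i) * card (derivs (drop c [0..<Suc (Suc n)]) (k - i)))"
    unfolding rr_eq_card_irr_derivs card_irr_derivs[of "[0..<Suc (Suc n)]"] by simp
  also have "\<dots> = (\<Sum>j\<le>n. \<Sum>i\<le>k. rr j i * ell (n - j) (k - i))"
    unfolding sum.shift_bounds_Suc_ivl atLeast0LessThan lessThan_Suc_atMost
    by (intro sum.cong refl split_at) simp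
  finally show ?thesis by (simp add: sum.swap[of _ "{..n}"])
qed

subsection \<open>The generating functions\<close>

lemma Lgf_nth_nth: "Lgf $ k $ n = int (ell n k)"
  by (simp add: Lgf_def)

lemma Rgf_nth_nth: "Rgf $ k $ n = int (rr n k)"
  by (simp add: Rgf_def)

lemma Rgf_equation: "Rgf = zvar * Rgf * Lgf + xvar"
proof (intro fps_ext)
  fix k n
  have "(zvar * Rgf * Lgf + xvar) $ k $ n
      = (case n of 0 \<Rightarrow> of_bool (k = 1) | Suc m \<Rightarrow> (Rgf * Lgf) $ k $ m)"
    by (cases n) (simp_all add: mult.assoc fps_X_nth fps_X_mult_nth)
  also have "\<dots> = int (rr n k)"
    by (cases n) (simp_all add: rr_atom rr_Suc fps_mult_nth fps_sum_nth Rgf_nth_nth Lgf_nth_nth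
        atLeast0AtMost)
  finally show "Rgf $ k $ n = (zvar * Rgf * Lgf + xvar) $ k $ n"
    by (simp add: Rgf_nth_nth)
qed

lemma Lgf_nth_Suc: "k \<ge> 1 \<Longrightarrow> Lgf $ k = Lgf $ Suc k + Rgf $ k"
  by (intro fps_ext) (simp add: Lgf_nth_nth Rgf_nth_nth ell_eq_rr_plus_ell_Suc[of k])

lemma Lgf_equation:
  "fps_to_fls Lgf
     = fls_X_inv * (fps_to_fls Lgf - fps_to_fls (xvar * fps_const (Lgf $ 1))) + fps_to_fls Rgf"
proof (rule fls_eqI)
  fix m :: int
  have X_const: "fls_nth (fps_to_fls (fps_X * fps_const c)) m = (if m = 1 then c else 0)"
    for c :: "int fps"
    by (simp only: fps_to_fls_nth fps_X_mult_nth fps_nth_fps_const) auto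
  have L0: "Lgf $ 0 = 0" and R0: "Rgf $ 0 = 0"
    by (simp_all add: fps_eq_iff Lgf_nth_nth Rgf_nth_nth ell_0 rr_0)
  consider "m < 0" | "m = 0" | "m \<ge> 1"
    by linarith
  then show "fls_nth (fps_to_fls Lgf) m = fls_nth (fls_X_inv
      * (fps_to_fls Lgf - fps_to_fls (xvar * fps_const (Lgf $ 1))) + fps_to_fls Rgf) m"
  proof cases
    case 3
    define k where "k = nat m"
    have k: "m = int k" "k \<ge> 1" "nat (m + 1) = Suc k"
      using 3 by (auto simp: k_def)
    then show ?thesis by (simp add: fls_X_inv_times_conv_shift X_const Lgf_nth_Suc[OF k(2)])
  qed (auto simp: fls_X_inv_times_conv_shift X_const L0 R0)
qed

theorem proposition3p2:
  shows "fps_to_fls Lgf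
           = fls_X_inv * (fps_to_fls Lgf - fps_to_fls (xvar * fps_const (Lgf $ 1))) + fps_to_fls Rgf
         \<and> Rgf = zvar * Rgf * Lgf + xvar"
  using Lgf_equation Rgf_equation by blast

end
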